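(* Let $\mathrm{k}\in\{\mathbb{R},\mathbb{C}\}$ and let $\mathcal{A}$ be a commutative unital Banach algebra over $\mathrm{k}$ whose only finite-dimensional subalgebra is $\mathrm{k}$. Then for all finite subsets $A,B$ of $\mathcal{A}$ with $\mathrm{k}\langle A\rangle\cap U(\mathcal{A})\neq\emptyset$ and $\mathrm{k}\langle B\rangle\cap U(\mathcal{A})\neq\emptyset$, $\dim_{\mathrm{k}}(AB)\geq\dim_{\mathrm{k}}(A)+\dim_{\mathrm{k}}(B)-1$.
   Context: Subalgebras contain $1$. $U(\mathcal{A})$ is the group of invertible elements, $\mathrm{k}\langle S\rangle$ the linear span of $S$, $\dim_{\mathrm{k}}(S)=\dim_{\mathrm{k}}\mathrm{k}\langle S\rangle$, and $AB=\{ab\mid a\in A,b\in B\}$. *)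

theory Defs
  imports "HOL-Analysis.Analysis"
begin

definition invertibles :: "'a::ring_1 set" where
  "invertibles = {x. \<exists>y. x * y = 1 \<and> y * x = 1}"

definition setprod :: "'a::times set \<Rightarrow> 'a set \<Rightarrow> 'a set" where
  "setprod A B = {a * b | a b. a \<in> A \<and> b \<in> B}"

definition ksubalgebra :: "('k::field \<Rightarrow> 'a::ring_1 \<Rightarrow> 'a) \<Rightarrow> 'a set \<Rightarrow> bool" where
  "ksubalgebra sc S \<longleftrightarrow> module.subspace sc S \<and> 1 \<in> S \<and> (\<forall>x\<in>S. \<forall>y\<in>S. x * y \<in> S)"

definition only_trivial_fd_subalgebra :: "('k::field \<Rightarrow> 'a::ring_1 \<Rightarrow> 'a) \<Rightarrow> bool" where
  "only_trivial_fd_subalgebra sc \<longleftrightarrow>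
     (\<forall>S. ksubalgebra sc S \<and> (\<exists>F. finite F \<and> S \<subseteq> module.span sc F)
          \<longrightarrow> S = range (\<lambda>c. sc c 1))"

text \<open>A complex Banach algebra structure on a real Banach algebra: a complex scalar
  multiplication extending the real one, making it a complex algebra with
  norm (c x) = |c| norm x.\<close>
definition complex_banach_algebra ::
  "(complex \<Rightarrow> 'a::{real_normed_algebra_1,banach} \<Rightarrow> 'a) \<Rightarrow> bool" where
  "complex_banach_algebra cs \<longleftrightarrow>
     vector_space cs \<and>
     (\<forall>r x. cs (complex_of_real r) x = scaleR r x) \<and>
     (\<forall>c x y. cs c (x * y) = cs c x * y \<and> cs c (x * y) = x * cs c y) \<and>
     (\<forall>c x. norm (cs c x) = cmod c * norm x)"

end

theory Submission
  imports Defs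
begin

text \<open>Multiplying \<open>A\<close> and \<open>B\<close> by inverses of invertible elements of their spans does not
  change any of the dimensions, so we may pass to subspaces \<open>V\<close>, \<open>W\<close> containing \<open>1\<close> and
  show \<open>dim V + dim W \<le> dim (V W) + 1\<close> by induction on \<open>dim W\<close>. If \<open>W\<close> stabilises \<open>V\<close>, the
  stabiliser of \<open>V\<close> is a finite-dimensional subalgebra, hence the scalars, and \<open>dim W \<le> 1\<close>.
  Otherwise some \<open>w \<in> W\<close> and an invertible \<open>a \<in> V\<close> satisfy \<open>a w \<notin> V\<close>; here \<open>a\<close> is \<open>1\<close> or
  \<open>1 + c v\<close>, which is invertible for small \<open>c\<close> by the Neumann series. The Dyson-type transform
  \<open>V' = V + a W\<close>, \<open>W' = {w \<in> W. a w \<in> V}\<close> keeps \<open>1\<close> in both spaces, does not decrease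
  \<open>dim V + dim W\<close>, has \<open>V' W' \<subseteq> span (V W)\<close>, and strictly shrinks \<open>W\<close>.\<close>

lemma invertibles_iff_dvd_one: "(x::'a::comm_ring_1) \<in> invertibles \<longleftrightarrow> x dvd 1"
  unfolding invertibles_def dvd_def by (auto simp: mult.commute)

lemma invertibles_mult:
  "(x::'a::comm_ring_1) \<in> invertibles \<Longrightarrow> y \<in> invertibles \<Longrightarrow> x * y \<in> invertibles"
  using mult_dvd_mono[of x 1 y 1] by (simp add: invertibles_iff_dvd_one)

lemma invertibles_obtain_inverse:
  fixes x :: "'a::comm_ring_1"
  assumes "x \<in> invertibles"
  obtains y where "y \<in> invertibles" "y * x = 1"
proof -
  obtain y where "1 = x * y"
    using assms unfolding invertibles_iff_dvd_one by (rule dvdE)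
  then show ?thesis
    using that[of y] by (simp add: invertibles_iff_dvd_one mult.commute dvdI)
qed

lemma one_minus_invertible:
  fixes x :: "'a::{real_normed_algebra_1,banach}"
  assumes "norm x < 1"
  shows "1 - x \<in> invertibles"
proof -
  have "summable (\<lambda>n. norm x ^ n)"
    using assms by (simp add: summable_geometric)
  then have "summable (\<lambda>n. x ^ n)"
    by (rule summable_comparison_test[rotated]) (auto intro: norm_power_ineq)
  then have geo: "(\<lambda>n. x ^ n) sums (\<Sum>n. x ^ n)"
    by (rule summable_sums)
  \<comment> \<open>both products telescope to \<open>1 - lim x\<^sup>n = 1\<close>\<close>
  have tele: "(\<lambda>n. x ^ n - x ^ Suc n) sums 1"
    using telescope_sums'[OF LIMSEQ_power_zero[OF assms]] by simp
  have "(\<lambda>n. (1 - x) * x ^ n) sums ((1 - x) * (\<Sum>n. x ^ n))"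
    by (rule sums_mult[OF geo])
  moreover have "(\<lambda>n. x ^ n * (1 - x)) sums ((\<Sum>n. x ^ n) * (1 - x))"
    by (rule sums_mult2[OF geo])
  moreover have "(\<lambda>n. (1 - x) * x ^ n) = (\<lambda>n. x ^ n - x ^ Suc n)"
    and "(\<lambda>n. x ^ n * (1 - x)) = (\<lambda>n. x ^ n - x ^ Suc n)"
    by (simp_all add: algebra_simps power_commutes)
  ultimately have "(1 - x) * (\<Sum>n. x ^ n) = 1" "(\<Sum>n. x ^ n) * (1 - x) = 1"
    using tele sums_unique2 by metis+
  then show ?thesis
    unfolding invertibles_def by blast
qed

lemma exists_one_plus_scaleR_invertible:
  fixes x :: "'a::{real_normed_algebra_1,banach}"
  shows "\<exists>c::real. c \<noteq> 0 \<and> 1 + c *\<^sub>R x \<in> invertibles"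
proof -
  define c where "c = - 1 / (norm x + 1)"
  have "norm (- (c *\<^sub>R x)) = norm x / (norm x + 1)"
    by (simp add: c_def)
  also have "\<dots> < 1"
    using norm_ge_zero[of x] by (simp add: divide_less_eq, linarith)
  finally have "1 + c *\<^sub>R x \<in> invertibles"
    using one_minus_invertible by fastforce
  moreover have "c \<noteq> 0"
    using norm_ge_zero[of x] by (simp add: c_def, linarith)
  ultimately show ?thesis by blast
qed

context vector_space
begin

definition finitely_spanned :: "'b set \<Rightarrow> bool"
  where "finitely_spanned V \<longleftrightarrow> (\<exists>F. finite F \<and> V \<subseteq> local.span F)"

lemma subset_span_trans:
  "V \<subseteq> local.span W \<Longrightarrow> W \<subseteq> local.span F \<Longrightarrow> V \<subseteq> local.span F"
  using span_minimal[OF _ subspace_span] by blast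

lemma finitely_spanned_subset:
  "local.finitely_spanned W \<Longrightarrow> V \<subseteq> local.span W \<Longrightarrow> local.finitely_spanned V"
  unfolding finitely_spanned_def using subset_span_trans by blast

lemma finitely_spanned_Un:
  assumes "local.finitely_spanned V" "local.finitely_spanned W"
  shows "local.finitely_spanned (V \<union> W)"
proof -
  obtain F G where "finite F" "V \<subseteq> local.span F" "finite G" "W \<subseteq> local.span G"
    using assms unfolding finitely_spanned_def by blast
  moreover have "local.span F \<union> local.span G \<subseteq> local.span (F \<union> G)"
    by (simp add: span_mono)
  ultimately show ?thesis
    unfolding finitely_spanned_def by (intro exI[of _ "F \<union> G"]) auto
qed

lemma independent_card_le_dim_finitely_spanned:
  assumes "local.independent B" "B \<subseteq> local.span W" "local.finitely_spanned W"
  shows "finite B \<and> card B \<le> local.dim W"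
proof -
  obtain F where "finite F" "W \<subseteq> local.span F"
    using assms(3) finitely_spanned_def by blast
  obtain C where C: "C \<subseteq> W" "local.independent C" "W \<subseteq> local.span C" "card C = local.dim W"
    by (rule basis_exists)
  have "C \<subseteq> local.span F"
    using C(1) \<open>W \<subseteq> local.span F\<close> by blast
  then have "finite C"
    using independent_span_bound[OF \<open>finite F\<close> C(2)] by blast
  moreover have "B \<subseteq> local.span C"
    using assms(2) C(3) by (rule subset_span_trans)
  ultimately have "finite B \<and> card B \<le> card C"
    using independent_span_bound assms(1) by blast
  then show ?thesis
    using C(4) by simp
qed

lemma dim_le_dim_finitely_spanned:
  assumes "V \<subseteq> local.span W" "local.finitely_spanned W"
  shows "local.dim V \<le> local.dim W"
proof -
  obtain B where B: "B \<subseteq> V" "local.independent B" "V \<subseteq> local.span B" "card B = local.dim V"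
    by (rule basis_exists)
  have "B \<subseteq> local.span W"
    using B(1) assms(1) by blast
  then have "card B \<le> local.dim W"
    using independent_card_le_dim_finitely_spanned[OF B(2) _ assms(2)] by blast
  then show ?thesis
    using B(4) by simp
qed

lemma dim_less_dim_finitely_spanned:
  assumes "local.subspace S" "S \<subseteq> T" "w \<in> T" "w \<notin> S" "local.finitely_spanned T"
  shows "local.dim S < local.dim T"
proof -
  obtain B where B: "B \<subseteq> S" "local.independent B" "S \<subseteq> local.span B" "card B = local.dim S"
    by (rule basis_exists)
  have "local.span B = S"
    using B(1,3) assms(1) by (rule span_subspace)
  then have "w \<notin> local.span B"
    using assms(4) by blast
  then have indep: "local.independent (insert w B)" and "w \<notin> B"
    using independent_insertI[OF _ B(2)] span_superset by blast+
  have "insert w B \<subseteq> local.span T"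
    using B(1) assms(2,3) span_superset by blast
  then have "finite (insert w B) \<and> card (insert w B) \<le> local.dim T"
    by (rule independent_card_le_dim_finitely_spanned[OF indep _ assms(5)])
  then show ?thesis
    using \<open>w \<notin> B\<close> B(4) by auto
qed

text \<open>A dependence of some \<open>d \<in> D - C\<close> on \<open>C\<close> and further vectors of \<open>D - C\<close> would put a
  combination of vectors of \<open>D - C\<close> into \<open>S \<inter> T \<subseteq> span (C \<inter> D)\<close>.\<close>
lemma independent_Un_bases:
  assumes "local.subspace S" "local.subspace T" "C \<subseteq> S" "D \<subseteq> T"
    and "local.independent C" "local.independent D" "finite D" "S \<inter> T \<subseteq> local.span (C \<inter> D)"
  shows "local.independent (C \<union> D)"
proof -
  have "local.independent (C \<union> E)" if "finite E" "E \<subseteq> D - C" for E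
    using that
  proof (induction E rule: finite_induct)
    case empty
    then show ?case using assms(5) by simp
  next
    case (insert d E)
    have "d \<notin> local.span (C \<union> E)"
    proof
      assume "d \<in> local.span (C \<union> E)"
      then obtain x y where xy: "x \<in> local.span C" "y \<in> local.span E" "d = x + y"
        unfolding span_Un by blast
      have "x \<in> S"
        using xy(1) span_minimal[OF assms(3,1)] by blast
      moreover have "x \<in> T"
      proof -
        have "y \<in> T"
          using xy(2) span_minimal[of E T] insert.prems assms(2,4) by blast
        moreover have "d \<in> T"
          using insert.prems assms(4) by blast
        moreover have "x = d - y"
          using xy(3) by simp
        ultimately show ?thesis
          using assms(2) subspace_diff by simp
      qed
      ultimately have "x \<in> local.span (C \<inter> D)"
        using assms(8) by blast
      then have "d \<in> local.span ((C \<inter> D) \<union> E)"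
        using xy(2,3) unfolding span_Un by blast
      moreover have "(C \<inter> D) \<union> E \<subseteq> D - {d}"
        using insert by blast
      ultimately have "d \<in> local.span (D - {d})"
        by (meson span_mono subsetD)
      moreover have "d \<in> D"
        using insert.prems by blast
      ultimately show False
        using assms(6) unfolding dependent_def by blast
    qed
    moreover have "local.independent (C \<union> E)"
      using insert by blast
    ultimately show ?case
      using independent_insertI by fastforce
  qed
  from this[of "D - C"] show ?thesis
    using assms(7) by simp
qed

lemma dim_add_dim_le_dim_Un_Int:
  assumes "local.subspace S" "local.subspace T" "local.finitely_spanned S" "local.finitely_spanned T"
  shows "local.dim S + local.dim T \<le> local.dim (S \<union> T) + local.dim (S \<inter> T)"
proof -
  obtain B where B: "B \<subseteq> S \<inter> T" "local.independent B" "S \<inter> T \<subseteq> local.span B" "card B = local.dim (S \<inter> T)"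
    by (rule basis_exists)
  have "B \<subseteq> S" "B \<subseteq> T"
    using B(1) by blast+
  obtain C where C: "B \<subseteq> C" "C \<subseteq> S" "local.independent C" "S \<subseteq> local.span C"
    using maximal_independent_subset_extend[OF \<open>B \<subseteq> S\<close> B(2)] by blast
  obtain D where D: "B \<subseteq> D" "D \<subseteq> T" "local.independent D" "T \<subseteq> local.span D"
    using maximal_independent_subset_extend[OF \<open>B \<subseteq> T\<close> B(2)] by blast
  have "C \<subseteq> local.span S" "D \<subseteq> local.span T"
    using C(2) D(2) span_superset by blast+
  then have fin: "finite C" "finite D"
    using independent_card_le_dim_finitely_spanned C(3) D(3) assms(3,4) by blast+
  have "S \<inter> T \<subseteq> local.span (C \<inter> D)"
    using B(3) span_mono[of B "C \<inter> D"] C(1) D(1) by blast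
  then have "local.independent (C \<union> D)"
    by (rule independent_Un_bases[OF assms(1,2) C(2) D(2) C(3) D(3) fin(2)])
  moreover have "C \<union> D \<subseteq> local.span (S \<union> T)"
    using C(2) D(2) span_superset by blast
  ultimately have "card (C \<union> D) \<le> local.dim (S \<union> T)"
    using independent_card_le_dim_finitely_spanned finitely_spanned_Un[OF assms(3,4)] by blast
  moreover have "card (C \<inter> D) \<le> local.dim (S \<inter> T)"
  proof (rule independent_card_le_dim_finitely_spanned[THEN conjunct2])
    show "local.independent (C \<inter> D)"
      using C(3) independent_mono by blast
    show "C \<inter> D \<subseteq> local.span (S \<inter> T)"
      using C(2) D(2) span_superset by blast
    show "local.finitely_spanned (S \<inter> T)"
      using finitely_spanned_subset[OF assms(3)] span_superset by blast
  qed
  moreover have "local.dim S = card C" "local.dim T = card D"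
    using C(2-4) D(2-4) basis_card_eq_dim by auto
  ultimately show ?thesis
    using card_Un_Int[OF fin] by linarith
qed

end

lemma inj_mult_left_invertible:
  fixes a :: "'a::ring_1"
  assumes "a \<in> invertibles"
  shows "inj ((*) a)"
proof (rule injI)
  fix x y
  assume "a * x = a * y"
  moreover obtain b where "b * a = 1"
    using assms unfolding invertibles_def by blast
  ultimately show "x = y"
    by (metis mult.assoc mult_1_left)
qed

lemma setprod_mono: "A \<subseteq> A' \<Longrightarrow> B \<subseteq> B' \<Longrightarrow> setprod A B \<subseteq> setprod A' B'"
  unfolding setprod_def by blast

lemma finite_setprod: "finite A \<Longrightarrow> finite B \<Longrightarrow> finite (setprod A B)"
proof -
  have "setprod A B = (\<lambda>(a, b). a * b) ` (A \<times> B)"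
    unfolding setprod_def by auto
  then show "finite A \<Longrightarrow> finite B \<Longrightarrow> finite (setprod A B)"
    by simp
qed

lemma setprod_mult_image:
  fixes u v :: "'a::ab_semigroup_mult"
  shows "setprod ((*) u ` A) ((*) v ` B) = (*) (u * v) ` setprod A B"
proof -
  have "u * a * (v * b) = u * v * (a * b)" for a b
    by (simp add: ac_simps)
  then show ?thesis
    unfolding setprod_def by (auto simp: image_iff) metis+
qed

locale comm_algebra = vector_space scale
  for scale :: "'k::field \<Rightarrow> 'a::comm_ring_1 \<Rightarrow> 'a" +
  assumes scale_mult_left: "scale c (x * y) = scale c x * y"
begin

lemma scale_mult_right: "scale c (x * y) = x * scale c y"
  using scale_mult_left[of c y x] by (simp add: mult.commute)

lemma module_hom_mult_left: "module_hom scale scale ((*) a)"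
  by unfold_locales (simp_all add: distrib_left scale_mult_right)

lemma subspace_mult_image: "local.subspace S \<Longrightarrow> local.subspace ((*) a ` S)"
  by (rule module_hom.subspace_image[OF module_hom_mult_left])

lemma span_mult_image: "local.span ((*) a ` S) = (*) a ` local.span S"
  by (rule module_hom.span_image[OF module_hom_mult_left])

lemma finitely_spanned_mult_image:
  "local.finitely_spanned S \<Longrightarrow> local.finitely_spanned ((*) a ` S)"
  unfolding finitely_spanned_def by (metis finite_imageI image_mono span_mult_image)

lemma dim_mult_image:
  assumes "a \<in> invertibles"
  shows "local.dim ((*) a ` S) = local.dim S"
proof -
  obtain B where B: "B \<subseteq> S" "local.independent B" "S \<subseteq> local.span B" "card B = local.dim S"
    by (rule basis_exists)
  have inj: "inj ((*) a)"
    using assms by (rule inj_mult_left_invertible)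
  have "local.independent ((*) a ` B)"
    using module_hom.independent_injective_image[OF module_hom_mult_left B(2)] inj
    by (simp add: inj_on_def)
  moreover have "(*) a ` S \<subseteq> local.span ((*) a ` B)"
    using B(3) span_mult_image by blast
  ultimately have "card ((*) a ` B) = local.dim ((*) a ` S)"
    using B(1) by (intro basis_card_eq_dim) auto
  then show ?thesis
    using B(4) card_image[OF inj_on_subset[OF inj]] by simp
qed

lemma mult_mem_span_setprod:
  assumes "x \<in> local.span F" "y \<in> local.span G"
  shows "x * y \<in> local.span (setprod F G)"
  using assms(1)
proof (induction rule: span_induct)
  case (step x)
  show ?case
    using assms(2)
  proof (induction rule: span_induct)
    case (step y)
    then show ?case
      using \<open>x \<in> F\<close> unfolding setprod_def by (intro span_base) blast
  next
    case base
    show ?case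
      by (rule module_hom.subspace_linear_preimage[OF module_hom_mult_left subspace_span])
  qed
next
  case base
  show ?case
    using module_hom.subspace_linear_preimage[OF module_hom_mult_left[of y] subspace_span]
    by (simp add: mult.commute)
qed

lemma span_setprod_span:
  "local.span (setprod (local.span F) (local.span G)) = local.span (setprod F G)"
proof
  show "local.span (setprod (local.span F) (local.span G)) \<subseteq> local.span (setprod F G)"
    using mult_mem_span_setprod unfolding setprod_def[of "local.span F"]
    by (intro span_minimal) auto
  show "local.span (setprod F G) \<subseteq> local.span (setprod (local.span F) (local.span G))"
    by (intro span_mono setprod_mono span_superset)
qed

lemma finitely_spanned_setprod:
  assumes "local.finitely_spanned V" "local.finitely_spanned W"
  shows "local.finitely_spanned (setprod V W)"
proof -
  obtain F G where F: "finite F" "V \<subseteq> local.span F" and G: "finite G" "W \<subseteq> local.span G"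
    using assms unfolding finitely_spanned_def by blast
  have "setprod V W \<subseteq> setprod (local.span F) (local.span G)"
    using F(2) G(2) by (rule setprod_mono)
  also have "\<dots> \<subseteq> local.span (setprod (local.span F) (local.span G))"
    by (rule span_superset)
  also have "\<dots> = local.span (setprod F G)"
    by (rule span_setprod_span)
  finally show ?thesis
    unfolding finitely_spanned_def using finite_setprod[OF F(1) G(1)] by blast
qed

end

locale algebra_without_fd_subalgebras = comm_algebra +
  assumes exists_one_plus_scale_invertible: "\<exists>c. c \<noteq> 0 \<and> 1 + scale c x \<in> invertibles"
    and trivial_fd_subalgebras: "only_trivial_fd_subalgebra scale"
begin

text \<open>The stabiliser of \<open>V\<close> is a subalgebra contained in \<open>V\<close>, so it is just the scalars.\<close>
lemma dim_le_one_if_stabilizes: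
  assumes "local.subspace V" "local.finitely_spanned V" "1 \<in> V"
    and "\<And>w v. w \<in> W \<Longrightarrow> v \<in> V \<Longrightarrow> w * v \<in> V"
  shows "local.dim W \<le> 1"
proof -
  define H where "H = {x. \<forall>v\<in>V. x * v \<in> V}"
  have "local.subspace H"
    unfolding subspace_def H_def
  proof (intro conjI ballI allI; clarsimp)
    show "0 \<in> V"
      using assms(1) subspace_0 by blast
    show "(x + y) * v \<in> V" if "\<forall>v\<in>V. x * v \<in> V" "\<forall>v\<in>V. y * v \<in> V" "v \<in> V" for x y v
      using that assms(1) subspace_add by (simp add: distrib_right)
    show "scale c x * v \<in> V" if "\<forall>v\<in>V. x * v \<in> V" "v \<in> V" for c x v
      using that assms(1) subspace_scale by (metis scale_mult_left)
  qed
  then have "ksubalgebra scale H"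
    unfolding ksubalgebra_def H_def by (auto simp: mult.assoc)
  moreover obtain F where "finite F" "V \<subseteq> local.span F"
    using assms(2) unfolding finitely_spanned_def by blast
  moreover have "H \<subseteq> V"
    unfolding H_def using assms(3) by force
  ultimately have "H = range (\<lambda>c. scale c 1)"
    using trivial_fd_subalgebras unfolding only_trivial_fd_subalgebra_def by blast
  moreover have "W \<subseteq> H"
    unfolding H_def using assms(4) by blast
  ultimately have "W \<subseteq> local.span {1}"
    using span_base span_scale by blast
  then show ?thesis
    using dim_le_card[of W "{1}"] by simp
qed

text \<open>If \<open>w \<in> V\<close>, then \<open>a = 1 + c v\<close> works, as \<open>a w = w + c (v w)\<close>.\<close>
lemma exists_invertible_mult_not_mem:
  assumes "local.subspace V" "1 \<in> V" "v \<in> V" "w * v \<notin> V"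
  obtains a where "a \<in> invertibles" "a \<in> V" "a * w \<notin> V"
proof (cases "w \<in> V")
  case False
  have "1 \<in> invertibles"
    unfolding invertibles_def by auto
  with False assms(2) show ?thesis
    using that[of 1] by simp
next
  case True
  obtain c where c: "c \<noteq> 0" "1 + scale c v \<in> invertibles"
    using exists_one_plus_scale_invertible by blast
  have "1 + scale c v \<in> V"
    using assms(1-3) subspace_add subspace_scale by blast
  moreover have "(1 + scale c v) * w \<notin> V"
  proof
    assume "(1 + scale c v) * w \<in> V"
    then have "(1 + scale c v) * w - w \<in> V"
      using subspace_diff[OF assms(1) _ True] by blast
    moreover have "(1 + scale c v) * w - w = scale c (w * v)"
      by (simp add: distrib_right scale_mult_right)
    ultimately have "scale c (w * v) \<in> V"
      by simp
    then have "scale (inverse c) (scale c (w * v)) \<in> V"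
      using subspace_scale[OF assms(1)] by blast
    with c(1) assms(4) show False
      by simp
  qed
  ultimately show ?thesis
    using c(2) that by blast
qed

text \<open>The transform \<open>(V, W) \<mapsto> (V + a W, W \<inter> a\<^sup>-\<^sup>1 V)\<close> does not decrease \<open>dim V + dim W\<close> \<dots>\<close>
lemma dim_add_dim_le_transform:
  assumes "local.subspace V" "local.subspace W"
    and "local.finitely_spanned V" "local.finitely_spanned W" "a \<in> invertibles"
  shows "local.dim V + local.dim W
    \<le> local.dim (V \<union> (*) a ` W) + local.dim {w \<in> W. a * w \<in> V}"
proof -
  have "V \<inter> (*) a ` W = (*) a ` {w \<in> W. a * w \<in> V}"
    by blast
  then have "local.dim (V \<inter> (*) a ` W) = local.dim {w \<in> W. a * w \<in> V}"
    using dim_mult_image[OF assms(5)] by simp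
  moreover have "local.dim ((*) a ` W) = local.dim W"
    using dim_mult_image[OF assms(5)] .
  moreover have "local.dim V + local.dim ((*) a ` W)
      \<le> local.dim (V \<union> (*) a ` W) + local.dim (V \<inter> (*) a ` W)"
    by (rule dim_add_dim_le_dim_Un_Int[OF assms(1) subspace_mult_image[OF assms(2)]
          assms(3) finitely_spanned_mult_image[OF assms(4)]])
  ultimately show ?thesis
    by simp
qed

text \<open>\<dots> and its product set lies in the span of \<open>V W\<close>, since \<open>(x + a y) z = x z + (a z) y\<close>.\<close>
lemma setprod_transform_subset:
  assumes "local.subspace V" "local.subspace W"
  shows "setprod (local.span (V \<union> (*) a ` W)) {w \<in> W. a * w \<in> V} \<subseteq> local.span (setprod V W)"
proof
  fix p
  assume p: "p \<in> setprod (local.span (V \<union> (*) a ` W)) {w \<in> W. a * w \<in> V}"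
  have "local.span V = V" "local.span W = W"
    using assms by simp_all
  then have span_Un_eq: "local.span (V \<union> (*) a ` W) = {x + y |x y. x \<in> V \<and> y \<in> (*) a ` W}"
    by (simp only: span_Un span_mult_image)
  obtain q z where "q \<in> local.span (V \<union> (*) a ` W)" "z \<in> W" "a * z \<in> V" "p = q * z"
    using p unfolding setprod_def by blast
  moreover obtain x y where "x \<in> V" "y \<in> W" "q = x + a * y"
    using \<open>q \<in> local.span (V \<union> (*) a ` W)\<close> unfolding span_Un_eq by blast
  ultimately have xyz: "x \<in> V" "y \<in> W" "z \<in> W" "a * z \<in> V" "p = (x + a * y) * z"
    by simp_all
  then have "p = x * z + (a * z) * y"
    by (simp add: algebra_simps)
  moreover have "x * z \<in> setprod V W" "(a * z) * y \<in> setprod V W"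
    unfolding setprod_def using xyz by blast+
  ultimately show "p \<in> local.span (setprod V W)"
    by (simp add: span_add span_base)
qed

theorem dim_add_dim_le_dim_setprod:
  assumes "local.subspace V" "local.subspace W"
    and "local.finitely_spanned V" "local.finitely_spanned W" "1 \<in> V" "1 \<in> W"
  shows "local.dim V + local.dim W \<le> local.dim (setprod V W) + 1"
  using assms
proof (induction "local.dim W" arbitrary: V W rule: less_induct)
  case less
  have fin: "local.finitely_spanned (setprod V W)"
    using finitely_spanned_setprod less.prems(3,4) by blast
  show ?case
  proof (cases "\<forall>w\<in>W. \<forall>v\<in>V. w * v \<in> V")
    case True
    have "V \<subseteq> setprod V W"
      unfolding setprod_def using less.prems(6) by force
    then have "local.dim V \<le> local.dim (setprod V W)"
      using dim_le_dim_finitely_spanned[OF _ fin] span_superset by blast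
    moreover have "local.dim W \<le> 1"
      using dim_le_one_if_stabilizes[OF less.prems(1,3,5)] True by blast
    ultimately show ?thesis
      by linarith
  next
    case False
    then obtain w v where w: "w \<in> W" "v \<in> V" "w * v \<notin> V"
      by blast
    then obtain a where a: "a \<in> invertibles" "a \<in> V" "a * w \<notin> V"
      using exists_invertible_mult_not_mem[OF less.prems(1,5)] by metis
    define V' where "V' = local.span (V \<union> (*) a ` W)"
    define W' where "W' = {w \<in> W. a * w \<in> V}"
    have "W' = W \<inter> {x. a * x \<in> V}"
      unfolding W'_def by blast
    then have W': "local.subspace W'"
      using subspace_inter[OF less.prems(2)
          module_hom.subspace_linear_preimage[OF module_hom_mult_left less.prems(1)]] by simp
    have "local.finitely_spanned (V \<union> (*) a ` W)"
      using finitely_spanned_Un[OF less.prems(3) finitely_spanned_mult_image[OF less.prems(4)]] .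
    then have V': "local.subspace V'" "local.finitely_spanned V'"
      unfolding V'_def using finitely_spanned_subset by auto
    have "W' \<subseteq> W" "w \<notin> W'"
      unfolding W'_def using a(3) by auto
    then have lt: "local.dim W' < local.dim W"
      by (rule dim_less_dim_finitely_spanned[OF W' _ w(1) _ less.prems(4)])
    have "W' \<subseteq> local.span W"
      using \<open>W' \<subseteq> W\<close> span_superset by blast
    then have fin_W': "local.finitely_spanned W'"
      by (rule finitely_spanned_subset[OF less.prems(4)])
    have "1 \<in> V'"
      unfolding V'_def using less.prems(5) span_superset by blast
    moreover have "1 \<in> W'"
      unfolding W'_def using less.prems(6) a(2) by simp
    ultimately have "local.dim V' + local.dim W' \<le> local.dim (setprod V' W') + 1"
      by (rule less.hyps[OF lt V'(1) W' V'(2) fin_W'])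
    moreover have "local.dim (setprod V' W') \<le> local.dim (setprod V W)"
      unfolding V'_def W'_def
      by (rule dim_le_dim_finitely_spanned[OF setprod_transform_subset[OF less.prems(1,2)] fin])
    moreover have "local.dim V + local.dim W \<le> local.dim V' + local.dim W'"
      using dim_add_dim_le_transform[OF less.prems(1-4) a(1)] unfolding V'_def W'_def by simp
    ultimately show ?thesis
      by linarith
  qed
qed

theorem dim_setprod_ge:
  assumes "finite A" "finite B" "local.span A \<inter> invertibles \<noteq> {}" "local.span B \<inter> invertibles \<noteq> {}"
  shows "local.dim A + local.dim B \<le> local.dim (setprod A B) + 1"
proof -
  obtain u u' where u: "u \<in> local.span A" "u' \<in> invertibles" "u' * u = 1"
    using assms(3) invertibles_obtain_inverse by blast
  obtain v v' where v: "v \<in> local.span B" "v' \<in> invertibles" "v' * v = 1"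
    using assms(4) invertibles_obtain_inverse by blast
  define V where "V = (*) u' ` local.span A"
  define W where "W = (*) v' ` local.span B"
  have "local.finitely_spanned (local.span A)" "local.finitely_spanned (local.span B)"
    unfolding finitely_spanned_def using assms(1,2) by blast+
  then have fin: "local.finitely_spanned V" "local.finitely_spanned W"
    unfolding V_def W_def by (simp_all add: finitely_spanned_mult_image)
  have sub: "local.subspace V" "local.subspace W"
    unfolding V_def W_def by (simp_all add: subspace_mult_image)
  have one: "1 \<in> V" "1 \<in> W"
    unfolding V_def W_def using u(1,3) v(1,3) by (metis image_eqI)+
  have "local.dim V + local.dim W \<le> local.dim (setprod V W) + 1"
    by (rule dim_add_dim_le_dim_setprod[OF sub fin one])
  moreover have "local.dim V = local.dim A" "local.dim W = local.dim B"
    unfolding V_def W_def using dim_mult_image u(2) v(2) by simp_all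
  moreover have "setprod V W = (*) (u' * v') ` setprod (local.span A) (local.span B)"
    unfolding V_def W_def by (rule setprod_mult_image)
  then have "local.dim (setprod V W) = local.dim (setprod A B)"
    using dim_mult_image invertibles_mult[OF u(2) v(2)] span_setprod_span
    by (metis dim_span)
  ultimately show ?thesis
    by simp
qed

end

lemma real_banach_algebra_without_fd_subalgebras:
  assumes "only_trivial_fd_subalgebra (scaleR :: real \<Rightarrow> 'a::{real_normed_algebra_1,banach,comm_ring_1} \<Rightarrow> 'a)"
  shows "algebra_without_fd_subalgebras (scaleR :: real \<Rightarrow> 'a \<Rightarrow> 'a)"
  unfolding algebra_without_fd_subalgebras_def algebra_without_fd_subalgebras_axioms_def
    comm_algebra_def comm_algebra_axioms_def
  using real_vector.vector_space_axioms exists_one_plus_scaleR_invertible assms by auto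

lemma complex_banach_algebra_without_fd_subalgebras:
  fixes cs :: "complex \<Rightarrow> 'a::{real_normed_algebra_1,banach,comm_ring_1} \<Rightarrow> 'a"
  assumes "complex_banach_algebra cs" "only_trivial_fd_subalgebra cs"
  shows "algebra_without_fd_subalgebras cs"
proof -
  have "\<exists>c. c \<noteq> 0 \<and> 1 + cs c x \<in> invertibles" for x
  proof -
    obtain c :: real where "c \<noteq> 0" "1 + c *\<^sub>R x \<in> invertibles"
      using exists_one_plus_scaleR_invertible by blast
    then show ?thesis
      using assms(1) unfolding complex_banach_algebra_def
      by (intro exI[of _ "complex_of_real c"]) simp
  qed
  then show ?thesis
    using assms unfolding algebra_without_fd_subalgebras_def algebra_without_fd_subalgebras_axioms_def
      comm_algebra_def comm_algebra_axioms_def complex_banach_algebra_def by blast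
qed

theorem corollary4p3:
  shows
  "(only_trivial_fd_subalgebra (scaleR :: real \<Rightarrow> 'a \<Rightarrow> 'a::{real_normed_algebra_1,banach,comm_ring_1})
      \<longrightarrow> (\<forall>A B :: 'a set. finite A \<and> finite B
            \<and> span A \<inter> invertibles \<noteq> {} \<and> span B \<inter> invertibles \<noteq> {}
            \<longrightarrow> int (dim (setprod A B)) \<ge> int (dim A) + int (dim B) - 1))
   \<and> (\<forall>cs :: complex \<Rightarrow> 'b \<Rightarrow> 'b::{real_normed_algebra_1,banach,comm_ring_1}.
        complex_banach_algebra cs \<and> only_trivial_fd_subalgebra cs
      \<longrightarrow> (\<forall>A B :: 'b set. finite A \<and> finite B
            \<and> module.span cs A \<inter> invertibles \<noteq> {} \<and> module.span cs B \<inter> invertibles \<noteq> {}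
            \<longrightarrow> int (vector_space.dim cs (setprod A B))
                  \<ge> int (vector_space.dim cs A) + int (vector_space.dim cs B) - 1))"
proof (intro conjI impI allI)
  fix A B :: "'a set"
  assume "only_trivial_fd_subalgebra (scaleR :: real \<Rightarrow> 'a \<Rightarrow> 'a)"
    and "finite A \<and> finite B \<and> span A \<inter> invertibles \<noteq> {} \<and> span B \<inter> invertibles \<noteq> {}"
  then have "dim A + dim B \<le> dim (setprod A B) + 1"
    using algebra_without_fd_subalgebras.dim_setprod_ge[OF real_banach_algebra_without_fd_subalgebras]
    by (simp add: span_raw_def dim_raw_def) blast
  then show "int (dim (setprod A B)) \<ge> int (dim A) + int (dim B) - 1"
    by linarith
next
  fix cs :: "complex \<Rightarrow> 'b \<Rightarrow> 'b" and A B :: "'b set"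
  assume "complex_banach_algebra cs \<and> only_trivial_fd_subalgebra cs"
    and "finite A \<and> finite B \<and> module.span cs A \<inter> invertibles \<noteq> {} \<and> module.span cs B \<inter> invertibles \<noteq> {}"
  then have "vector_space.dim cs A + vector_space.dim cs B \<le> vector_space.dim cs (setprod A B) + 1"
    using algebra_without_fd_subalgebras.dim_setprod_ge[OF complex_banach_algebra_without_fd_subalgebras]
    by blast
  then show "int (vector_space.dim cs (setprod A B))
      \<ge> int (vector_space.dim cs A) + int (vector_space.dim cs B) - 1"
    by linarith
qed

end
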